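(* For $r\ge1$ and $1\le l\le r$, \[ \frac{\partial}{\partial a_l}C_{1,r}(a_1,\dots,a_r)=-\sum_{k=l}^rC_{1,k-1}(a_1,\dots,a_{k-1})\,C_{1,r-k}(a_{k+1},\dots,a_r). \] Consequently, with $C_{1,r}(a)=C_{1,r}(a,\dots,a)$, \[ C_{1,r}'(a)=-\sum_{l=1}^r\sum_{k=l}^rC_{1,k-1}(a)C_{1,r-k}(a)=-\sum_{k=1}^rk\,C_{1,r-k}(a)\,C_{1,k-1}(a). \]
   Context: Bernoulli polynomials $B_n(a)$: $\sum_{n\ge0}B_n(a)x^n/n!=xe^{ax}/(e^x-1)$. For $r\ge1$, $S_r=\{(n_1,\dots,n_r)\in\mathbb Z_{\ge0}^r: n_1+\dots+n_r=r,\ n_{j+1}+\dots+n_r\le r-j\ (1\le j<r)\}$ and $C_{1,r}(a_1,\dots,a_r)=(-1)^r\sum_{(n_1,\dots,n_r)\in S_r}\prod_{j=1}^r\frac{B_{n_j}(a_j)}{n_j!}$. By convention $C_{1,0}()=C_{1,0}(a)=1$. *)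

theory Defs
  imports "HOL-Analysis.Analysis" "HOL-Computational_Algebra.Formal_Power_Series"
begin

definition bernpoly :: "nat \<Rightarrow> real \<Rightarrow> real" where
  "bernpoly n a = fact n * fps_nth (fps_X * fps_exp a / (fps_exp 1 - 1)) n"

text \<open>The index set S_r, tuples represented as lists of length r
  (list position j-1 holds n_j).\<close>
definition S_set :: "nat \<Rightarrow> nat list set" where
  "S_set r = {ns. length ns = r \<and> sum_list ns = r \<and>
      (\<forall>j. 1 \<le> j \<and> j < r \<longrightarrow> sum_list (drop j ns) \<le> r - j)}"

definition C1 :: "real list \<Rightarrow> real" where
  "C1 as = (-1) ^ length as *
     (\<Sum>ns\<in>S_set (length as). \<Prod>j<length as. bernpoly (ns ! j) (as ! j) / fact (ns ! j))"

definition C1diag :: "nat \<Rightarrow> real \<Rightarrow> real" where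
  "C1diag r a = C1 (replicate r a)"

end

theory Submission
  imports Defs
begin

text \<open>The normalised Bernoulli polynomials b_n = B_n/n! satisfy b_0 = 1 and b_n' = b_(n-1).
  Differentiating a product in the sum defining C_{1,r} with respect to a_l therefore
  lowers n_l by one. Since the suffix condition on S_r says that every prefix sum
  n_1 + ... + n_j is at least j, a tuple of S_r with n_l lowered first has a prefix
  deficit at some k \<ge> l, where necessarily n_k = 0; cutting there splits the tuple
  bijectively into a tuple of S_(k-1) and a tuple of S_(r-k). On the diagonal the partial
  derivatives add up, and each k is counted once for every l \<le> k.\<close>

subsection \<open>Normalised Bernoulli polynomials\<close>

abbreviation bernpoly_div_fact :: "nat \<Rightarrow> real \<Rightarrow> real" where
  "bernpoly_div_fact n t \<equiv> bernpoly n t / fact n"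

definition bernoulli_fps :: "real fps" where
  "bernoulli_fps = fps_X / (fps_exp 1 - 1)"

lemma fps_exp_minus_one_dvd_X: "(fps_exp (1::real) - 1) dvd fps_X"
proof -
  have "fps_nth (fps_exp (1::real) - 1) 1 \<noteq> 0"
    by simp
  then have nz: "fps_exp (1::real) - 1 \<noteq> 0"
    by auto
  have "subdegree (fps_exp (1::real) - 1) = 1"
    by (rule subdegreeI) auto
  then show ?thesis
    using fps_dvd_iff[OF nz] by simp
qed

lemma fps_nth_bernoulli_fps_0: "fps_nth bernoulli_fps 0 = 1"
proof -
  have "bernoulli_fps * (fps_exp 1 - 1) = fps_X"
    unfolding bernoulli_fps_def using fps_exp_minus_one_dvd_X by simp
  then have "fps_nth (bernoulli_fps * (fps_exp 1 - 1)) 1 = 1"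
    by simp
  then show ?thesis
    by (simp add: fps_mult_nth)
qed

lemma bernpoly_div_fact_eq:
  "bernpoly n t / fact n = (\<Sum>i=0..n. t ^ i / fact i * fps_nth bernoulli_fps (n - i))"
proof -
  have "fps_X * fps_exp t / (fps_exp 1 - 1) = fps_exp t * bernoulli_fps"
    unfolding bernoulli_fps_def by (metis div_mult_swap fps_exp_minus_one_dvd_X mult.commute)
  then show ?thesis
    unfolding bernpoly_def by (simp add: fps_mult_nth)
qed

lemma bernpoly_0: "bernpoly 0 t = 1"
  using bernpoly_div_fact_eq[of 0 t] by (simp add: fps_nth_bernoulli_fps_0)

lemma has_real_derivative_bernpoly_div_fact:
  "((\<lambda>t. bernpoly (Suc n) t / fact (Suc n)) has_real_derivative bernpoly n t / fact n) (at t)"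
proof -
  have shift: "real (Suc i) * t ^ i * c / fact (Suc i) = t ^ i * c / fact i" for i c
    by (simp add: divide_simps del: of_nat_Suc)
  have "((\<lambda>t. \<Sum>i=0..m. t ^ i / fact i * fps_nth bernoulli_fps (m - i)) has_real_derivative
      (\<Sum>i=0..m. (of_nat i * t ^ (i - 1)) / fact i * fps_nth bernoulli_fps (m - i))) (at t)" for m
    by (auto intro!: derivative_eq_intros)
  note this[of "Suc n"]
  also have "(\<Sum>i=0..Suc n. (of_nat i * t ^ (i - 1)) / fact i * fps_nth bernoulli_fps (Suc n - i)) =
      bernpoly n t / fact n"
    unfolding bernpoly_div_fact_eq
    by (subst sum.atLeast0_atMost_Suc_shift) (simp add: shift del: of_nat_Suc fact_Suc)
  finally show ?thesis
    unfolding bernpoly_div_fact_eq .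
qed

subsection \<open>Prefix sums and the index sets S_r\<close>

definition prefix_sum :: "nat list \<Rightarrow> nat \<Rightarrow> nat" where
  "prefix_sum ns j = sum_list (take j ns)"

lemma prefix_sum_0 [simp]: "prefix_sum ns 0 = 0"
  unfolding prefix_sum_def by simp

lemma prefix_sum_add: "prefix_sum ns (k + j) = prefix_sum ns k + prefix_sum (drop k ns) j"
  unfolding prefix_sum_def by (simp add: take_add)

lemma prefix_sum_mono: "j \<le> j' \<Longrightarrow> prefix_sum ns j \<le> prefix_sum ns j'"
  using prefix_sum_add[of ns j "j' - j"] by simp

lemma prefix_sum_Suc: "k < length ns \<Longrightarrow> prefix_sum ns (Suc k) = prefix_sum ns k + ns ! k"
  unfolding prefix_sum_def by (simp add: take_Suc_conv_app_nth)

lemma prefix_sum_take: "prefix_sum (take m ns) j = prefix_sum ns (min j m)"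
  unfolding prefix_sum_def by (simp add: min.commute)

lemma prefix_sum_eq_sum_list: "length ns \<le> j \<Longrightarrow> prefix_sum ns j = sum_list ns"
  unfolding prefix_sum_def by simp

lemma prefix_sum_plus_sum_list_drop: "prefix_sum ns j + sum_list (drop j ns) = sum_list ns"
  unfolding prefix_sum_def by (metis append_take_drop_id sum_list_append)

lemma prefix_sum_append_Cons:
  "prefix_sum (p @ x # q) j =
     (if j \<le> length p then prefix_sum p j else sum_list p + x + prefix_sum q (j - length p - 1))"
  unfolding prefix_sum_def by (cases "j - length p") auto

lemma prefix_sum_update_Suc:
  assumes "i < length ns"
  shows "prefix_sum (ns[i := ns ! i + 1]) j = prefix_sum ns j + (if i < j then 1 else 0)"
proof (cases "i < j")
  case True
  then have "i < length (take j ns)" "take j ns ! i = ns ! i"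
    using assms by auto
  then show ?thesis
    using True unfolding prefix_sum_def take_update_swap by (simp add: sum_list_update)
next
  case False
  then have "length (take j ns) \<le> i"
    by simp
  then show ?thesis
    using False unfolding prefix_sum_def take_update_swap by (simp add: list_update_beyond)
qed

lemma S_set_iff_prefix_sum:
  "ns \<in> S_set r \<longleftrightarrow> length ns = r \<and> sum_list ns = r \<and> (\<forall>j\<le>r. j \<le> prefix_sum ns j)"
proof -
  have "(1 \<le> j \<and> j < r \<longrightarrow> sum_list (drop j ns) \<le> r - j) \<longleftrightarrow> (j \<le> r \<longrightarrow> j \<le> prefix_sum ns j)"
    if "length ns = r" "sum_list ns = r" for j
    using that prefix_sum_plus_sum_list_drop[of ns j] prefix_sum_eq_sum_list[of ns j]
    by (cases "j = 0") auto
  then show ?thesis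
    unfolding S_set_def by auto
qed

lemma length_S_set: "ns \<in> S_set r \<Longrightarrow> length ns = r"
  unfolding S_set_def by simp

lemma finite_S_set: "finite (S_set r)"
proof (rule finite_subset)
  show "S_set r \<subseteq> {ns. set ns \<subseteq> {..r} \<and> length ns = r}"
    unfolding S_set_def using member_le_sum_list by fastforce
  show "finite {ns. set ns \<subseteq> {..r} \<and> length ns = r}"
    by (rule finite_lists_length_eq) simp
qed

text \<open>The tuples of S_r with n_l \<ge> 1, after lowering n_l by one.\<close>

definition S_set_lowered :: "nat \<Rightarrow> nat \<Rightarrow> nat list set" where
  "S_set_lowered l r = {ms. length ms = r \<and> sum_list ms = r - 1 \<and>
      (\<forall>j\<le>r. (if j < l then j else j - 1) \<le> prefix_sum ms j)}"

lemma raise_in_S_set_iff: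
  assumes "length ms = r" "1 \<le> l" "l \<le> r"
  shows "ms[l - 1 := ms ! (l - 1) + 1] \<in> S_set r \<longleftrightarrow> ms \<in> S_set_lowered l r"
proof -
  have "prefix_sum (ms[l - 1 := ms ! (l - 1) + 1]) j = prefix_sum ms j + (if l \<le> j then 1 else 0)" for j
    using prefix_sum_update_Suc[of "l - 1" ms j] assms by (auto split: if_splits)
  moreover have "sum_list (ms[l - 1 := ms ! (l - 1) + 1]) = sum_list ms + 1"
    using assms by (simp add: sum_list_update)
  moreover have "(\<forall>j\<le>r. j \<le> prefix_sum ms j + (if l \<le> j then 1 else 0)) \<longleftrightarrow>
      (\<forall>j\<le>r. (if j < l then j else j - 1) \<le> prefix_sum ms j)"
    using assms(2) by (intro iff_allI) auto
  ultimately show ?thesis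
    unfolding S_set_iff_prefix_sum S_set_lowered_def using assms by auto
qed

lemma sum_S_set_lower:
  assumes "1 \<le> l" "l \<le> r"
  shows "(\<Sum>ns\<in>{ns\<in>S_set r. 0 < ns ! (l - 1)}. F (ns[l - 1 := ns ! (l - 1) - 1])) =
    (\<Sum>ms\<in>S_set_lowered l r. F ms)"
proof (rule sum.reindex_bij_witness[where i = "\<lambda>ms. ms[l - 1 := ms ! (l - 1) + 1]"])
  fix ns assume ns: "ns \<in> {ns\<in>S_set r. 0 < ns ! (l - 1)}"
  then have "length ns = r"
    by (simp add: length_S_set)
  then show "ns[l - 1 := ns ! (l - 1) - 1, l - 1 := ns[l - 1 := ns ! (l - 1) - 1] ! (l - 1) + 1] = ns"
    and "ns[l - 1 := ns ! (l - 1) - 1] \<in> S_set_lowered l r"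
    using raise_in_S_set_iff[of "ns[l - 1 := ns ! (l - 1) - 1]" r l] ns assms by auto
next
  fix ms assume ms: "ms \<in> S_set_lowered l r"
  then have "length ms = r"
    unfolding S_set_lowered_def by simp
  then show "ms[l - 1 := ms ! (l - 1) + 1, l - 1 := ms[l - 1 := ms ! (l - 1) + 1] ! (l - 1) - 1] = ms"
    and "ms[l - 1 := ms ! (l - 1) + 1] \<in> {ns \<in> S_set r. 0 < ns ! (l - 1)}"
    using raise_in_S_set_iff[of ms r l] ms assms by auto
qed simp

text \<open>A lowered tuple has a prefix deficit at some k \<ge> l (at the latest at k = r); the
  first one is where it is cut into a tuple of S_(k-1), a zero, and a tuple of S_(r-k).\<close>

definition first_deficit :: "nat \<Rightarrow> nat list \<Rightarrow> nat" where
  "first_deficit l ms = (LEAST k. l \<le> k \<and> prefix_sum ms k = k - 1)"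

lemma first_deficitD:
  assumes "1 \<le> l" "l \<le> r" "ms \<in> S_set_lowered l r"
  defines "k \<equiv> first_deficit l ms"
  shows "l \<le> k" "k \<le> r" "prefix_sum ms k = k - 1" "\<And>j. j < k \<Longrightarrow> j \<le> prefix_sum ms j"
    and "ms ! (k - 1) = 0"
proof -
  have len: "length ms = r"
    and lower: "\<And>j. j \<le> r \<Longrightarrow> (if j < l then j else j - 1) \<le> prefix_sum ms j"
    using assms(3) unfolding S_set_lowered_def by auto
  have "l \<le> r \<and> prefix_sum ms r = r - 1"
    using assms(2,3) prefix_sum_eq_sum_list[of ms r] unfolding S_set_lowered_def by auto
  then show kl: "l \<le> k" and kdef: "prefix_sum ms k = k - 1" and kr: "k \<le> r"
    unfolding k_def first_deficit_def by (auto intro: LeastI2_wellorder Least_le)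
  show kmin: "j \<le> prefix_sum ms j" if "j < k" for j
  proof (cases "j < l")
    case True
    then show ?thesis
      using lower[of j] kr that by auto
  next
    case False
    then have "prefix_sum ms j \<noteq> j - 1"
      using not_less_Least[of j "\<lambda>k. l \<le> k \<and> prefix_sum ms k = k - 1"] that
      unfolding k_def first_deficit_def by auto
    then show ?thesis
      using lower[of j] kr that False by auto
  qed
  have "prefix_sum ms k = prefix_sum ms (k - 1) + ms ! (k - 1)"
    using prefix_sum_Suc[of "k - 1" ms] kl kr len assms(1) by simp
  moreover have "k - 1 \<le> prefix_sum ms (k - 1)"
    using kmin[of "k - 1"] kl assms(1) by auto
  ultimately show "ms ! (k - 1) = 0"
    using kdef by linarith
qed

lemma first_deficit_append_Cons:
  assumes "1 \<le> l" "l \<le> k" "p \<in> S_set (k - 1)"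
  shows "first_deficit l (p @ 0 # q) = k"
  unfolding first_deficit_def
proof (rule Least_equality)
  have p: "length p = k - 1" "sum_list p = k - 1" "\<And>j. j \<le> k - 1 \<Longrightarrow> j \<le> prefix_sum p j"
    using assms(3) unfolding S_set_iff_prefix_sum by auto
  then show "l \<le> k \<and> prefix_sum (p @ 0 # q) k = k - 1"
    using assms by (simp add: prefix_sum_append_Cons)
  fix j assume j: "l \<le> j \<and> prefix_sum (p @ 0 # q) j = j - 1"
  show "k \<le> j"
  proof (rule ccontr)
    assume "\<not> k \<le> j"
    then have "prefix_sum (p @ 0 # q) j = prefix_sum p j" "j \<le> prefix_sum p j"
      using p by (auto simp: prefix_sum_append_Cons)
    then show False
      using j assms(1) by auto
  qed
qed

lemma append_Cons_in_S_set_lowered: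
  assumes "1 \<le> l" "l \<le> k" "k \<le> r" "p \<in> S_set (k - 1)" "q \<in> S_set (r - k)"
  shows "p @ 0 # q \<in> S_set_lowered l r"
proof -
  have p: "length p = k - 1" "sum_list p = k - 1" "\<And>j. j \<le> k - 1 \<Longrightarrow> j \<le> prefix_sum p j"
    using assms(4) unfolding S_set_iff_prefix_sum by auto
  have q: "length q = r - k" "sum_list q = r - k" "\<And>j. j \<le> r - k \<Longrightarrow> j \<le> prefix_sum q j"
    using assms(5) unfolding S_set_iff_prefix_sum by auto
  have "(if j < l then j else j - 1) \<le> prefix_sum (p @ 0 # q) j" if "j \<le> r" for j
  proof (cases "j \<le> k - 1")
    case True
    then have "j \<le> prefix_sum p j"
      using p(3) by blast
    then show ?thesis
      using True p(1) by (auto simp: prefix_sum_append_Cons)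
  next
    case False
    then have "prefix_sum (p @ 0 # q) j = k - 1 + prefix_sum q (j - k)"
      using p assms(1,2) by (simp add: prefix_sum_append_Cons)
    moreover have "j - k \<le> prefix_sum q (j - k)"
      using q(3)[of "j - k"] that by auto
    ultimately show ?thesis
      using False assms by auto
  qed
  then show ?thesis
    unfolding S_set_lowered_def using p q assms by auto
qed

lemma sum_S_set_lowered_split:
  assumes "1 \<le> l" "l \<le> r"
  shows "(\<Sum>(k, p, q)\<in>(SIGMA k:{l..r}. S_set (k - 1) \<times> S_set (r - k)). F (p @ 0 # q)) =
    (\<Sum>ms\<in>S_set_lowered l r. F ms)"
proof (rule sum.reindex_bij_witness[where j = "\<lambda>(k, p, q). p @ 0 # q"
      and i = "\<lambda>ms. (first_deficit l ms, take (first_deficit l ms - 1) ms, drop (first_deficit l ms) ms)"])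
  fix x assume "x \<in> (SIGMA k:{l..r}. S_set (k - 1) \<times> S_set (r - k))"
  then obtain k p q where x: "x = (k, p, q)" "l \<le> k" "k \<le> r" "p \<in> S_set (k - 1)" "q \<in> S_set (r - k)"
    by auto
  have "length p = k - 1" "Suc (k - 1) = k"
    using x(4) assms(1) x(2) by (auto simp: length_S_set)
  then show "(\<lambda>ms. (first_deficit l ms, take (first_deficit l ms - 1) ms, drop (first_deficit l ms) ms))
      ((\<lambda>(k, p, q). p @ 0 # q) x) = x"
    using first_deficit_append_Cons[OF assms(1) x(2,4)] x(1) by simp
  show "(\<lambda>(k, p, q). p @ 0 # q) x \<in> S_set_lowered l r"
    using append_Cons_in_S_set_lowered[OF assms(1) x(2-5)] x(1) by simp
next
  fix ms assume ms: "ms \<in> S_set_lowered l r"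
  define k where "k = first_deficit l ms"
  note k = first_deficitD[OF assms ms, folded k_def]
  have len: "length ms = r" and sum: "sum_list ms = r - 1"
    and lower: "\<And>j. j \<le> r \<Longrightarrow> (if j < l then j else j - 1) \<le> prefix_sum ms j"
    using ms unfolding S_set_lowered_def by auto
  have k1: "k - 1 < length ms" "Suc (k - 1) = k"
    using k(1,2) assms len by auto
  show "(\<lambda>(k, p, q). p @ 0 # q) (first_deficit l ms, take (first_deficit l ms - 1) ms,
      drop (first_deficit l ms) ms) = ms"
    using id_take_nth_drop[OF k1(1)] k(5) k1(2) unfolding k_def[symmetric] by simp
  have "prefix_sum ms (k - 1) = k - 1"
    using prefix_sum_mono[of "k - 1" k ms] k(3) k(4)[of "k - 1"] k1 by linarith
  then have "sum_list (take (k - 1) ms) = k - 1"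
    unfolding prefix_sum_def .
  then have "take (k - 1) ms \<in> S_set (k - 1)"
    using k(4) len k1 unfolding S_set_iff_prefix_sum by (auto simp: prefix_sum_take min_def)
  moreover have "drop k ms \<in> S_set (r - k)"
    unfolding S_set_iff_prefix_sum
  proof (intro conjI allI impI)
    show "length (drop k ms) = r - k"
      using len by simp
    show "sum_list (drop k ms) = r - k"
      using prefix_sum_plus_sum_list_drop[of ms k] k(1,3) sum assms(1) by linarith
    fix j assume "j \<le> r - k"
    then have "k + j - 1 \<le> prefix_sum ms (k + j)"
      using lower[of "k + j"] k(1,2) by (auto split: if_splits)
    then show "j \<le> prefix_sum (drop k ms) j"
      using prefix_sum_add[of ms k j] k(3) k1 by linarith
  qed
  ultimately show "(first_deficit l ms, take (first_deficit l ms - 1) ms, drop (first_deficit l ms) ms)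
      \<in> (SIGMA k:{l..r}. S_set (k - 1) \<times> S_set (r - k))"
    using k(1,2) unfolding k_def by auto
qed (simp add: split_beta)

lemma prod_append_Cons:
  "(\<Prod>j<length (p @ x # q). h j ((p @ x # q) ! j)) =
    (\<Prod>j<length p. h j (p ! j)) * h (length p) x * (\<Prod>j<length q. h (Suc (length p) + j) (q ! j))"
proof (induction p arbitrary: h)
  case Nil
  show ?case
    by (simp add: prod.lessThan_Suc_shift del: prod.lessThan_Suc)
next
  case (Cons a p)
  have "(\<Prod>j<length ((a # p) @ x # q). h j (((a # p) @ x # q) ! j)) =
      h 0 a * (\<Prod>j<length (p @ x # q). h (Suc j) ((p @ x # q) ! j))"
    by (simp add: prod.lessThan_Suc_shift del: prod.lessThan_Suc)
  also have "\<dots> = h 0 a * ((\<Prod>j<length p. h (Suc j) (p ! j)) * h (Suc (length p)) x *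
      (\<Prod>j<length q. h (Suc (Suc (length p) + j)) (q ! j)))"
    using Cons[of "\<lambda>j. h (Suc j)"] by simp
  also have "\<dots> = (\<Prod>j<length (a # p). h j ((a # p) ! j)) * h (length (a # p)) x *
      (\<Prod>j<length q. h (Suc (length (a # p)) + j) (q ! j))"
    by (simp add: prod.lessThan_Suc_shift mult.assoc del: prod.lessThan_Suc)
  finally show ?case .
qed

lemma sum_prod_S_set_lower:
  fixes h :: "nat \<Rightarrow> nat \<Rightarrow> 'a::comm_semiring_1"
  assumes h0: "\<And>j. h j 0 = 1" and "1 \<le> l" "l \<le> r"
  shows "(\<Sum>ns\<in>{ns\<in>S_set r. 0 < ns ! (l - 1)}. \<Prod>j<r. h j (ns[l - 1 := ns ! (l - 1) - 1] ! j)) =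
    (\<Sum>k=l..r. (\<Sum>p\<in>S_set (k - 1). \<Prod>j<k - 1. h j (p ! j)) *
               (\<Sum>q\<in>S_set (r - k). \<Prod>j<r - k. h (k + j) (q ! j)))"
proof -
  let ?H = "\<lambda>ms. \<Prod>j<r. h j (ms ! j)"
  have "(\<Sum>ns\<in>{ns\<in>S_set r. 0 < ns ! (l - 1)}. ?H (ns[l - 1 := ns ! (l - 1) - 1])) =
      (\<Sum>ms\<in>S_set_lowered l r. ?H ms)"
    by (rule sum_S_set_lower[OF assms(2,3)])
  also have "\<dots> = (\<Sum>(k, p, q)\<in>(SIGMA k:{l..r}. S_set (k - 1) \<times> S_set (r - k)). ?H (p @ 0 # q))"
    by (rule sum_S_set_lowered_split[OF assms(2,3), symmetric])
  also have "\<dots> = (\<Sum>(k, p, q)\<in>(SIGMA k:{l..r}. S_set (k - 1) \<times> S_set (r - k)).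
      (\<Prod>j<k - 1. h j (p ! j)) * (\<Prod>j<r - k. h (k + j) (q ! j)))"
  proof (rule sum.cong[OF refl], clarify)
    fix k p q assume "k \<in> {l..r}" "p \<in> S_set (k - 1)" "q \<in> S_set (r - k)"
    then have "length p = k - 1" "length q = r - k" "length (p @ 0 # q) = r" "Suc (k - 1) = k"
      using assms(2) by (auto simp: length_S_set)
    then show "?H (p @ 0 # q) = (\<Prod>j<k - 1. h j (p ! j)) * (\<Prod>j<r - k. h (k + j) (q ! j))"
      using prod_append_Cons[of h p 0 q] h0 by simp
  qed
  also have "\<dots> = (\<Sum>k=l..r. \<Sum>(p, q)\<in>S_set (k - 1) \<times> S_set (r - k).
      (\<Prod>j<k - 1. h j (p ! j)) * (\<Prod>j<r - k. h (k + j) (q ! j)))"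
    by (subst sum.Sigma) (auto simp: finite_S_set)
  also have "\<dots> = (\<Sum>k=l..r. (\<Sum>p\<in>S_set (k - 1). \<Prod>j<k - 1. h j (p ! j)) *
      (\<Sum>q\<in>S_set (r - k). \<Prod>j<r - k. h (k + j) (q ! j)))"
    by (simp add: sum_product sum.cartesian_product)
  finally show ?thesis .
qed

subsection \<open>Derivatives for an Appell family\<close>

definition C1_appell :: "(nat \<Rightarrow> real \<Rightarrow> real) \<Rightarrow> real list \<Rightarrow> real" where
  "C1_appell f as = (\<Sum>ns\<in>S_set (length as). \<Prod>j<length as. f (ns ! j) (as ! j))"

locale appell_family =
  fixes f :: "nat \<Rightarrow> real \<Rightarrow> real"
  assumes f_0: "f 0 t = 1"
    and has_real_derivative_f_Suc: "(f (Suc n) has_real_derivative f n t) (at t)"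
begin

lemma has_real_derivative_prod_f:
  assumes u: "\<And>j. j < length ns \<Longrightarrow> (u j has_real_derivative u' j) (at t)"
  shows "((\<lambda>t. \<Prod>j<length ns. f (ns ! j) (u j t)) has_real_derivative
      (\<Sum>i<length ns. u' i *
         (if 0 < ns ! i then \<Prod>j<length ns. f (ns[i := ns ! i - 1] ! j) (u j t) else 0))) (at t)"
proof -
  define f' where "f' i = (if ns ! i = 0 then 0 else f (ns ! i - 1) (u i t) * u' i)" for i
  have lowered: "f' i * (\<Prod>j\<in>{..<length ns} - {i}. f (ns ! j) (u j t)) =
      u' i * (if 0 < ns ! i then \<Prod>j<length ns. f (ns[i := ns ! i - 1] ! j) (u j t) else 0)"
    if "i < length ns" for i
  proof -
    have "(\<Prod>j<length ns. f (ns[i := ns ! i - 1] ! j) (u j t)) =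
        f (ns ! i - 1) (u i t) * (\<Prod>j\<in>{..<length ns} - {i}. f (ns ! j) (u j t))"
      using that by (subst prod.remove[of _ i]) (auto intro!: prod.cong)
    then show ?thesis
      unfolding f'_def by simp
  qed
  have "((\<lambda>t. \<Prod>j<length ns. f (ns ! j) (u j t)) has_real_derivative
      (\<Sum>i<length ns. f' i * (\<Prod>j\<in>{..<length ns} - {i}. f (ns ! j) (u j t)))) (at t)"
  proof (rule has_field_derivative_prod)
    fix i assume i: "i \<in> {..<length ns}"
    show "((\<lambda>t. f (ns ! i) (u i t)) has_real_derivative f' i) (at t)"
    proof (cases "ns ! i")
      case 0
      then show ?thesis
        unfolding f'_def by (simp add: f_0)
    next
      case (Suc m)
      then show ?thesis
        using DERIV_chain2[OF has_real_derivative_f_Suc u] i unfolding f'_def by simp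
    qed
  qed
  also have "(\<Sum>i<length ns. f' i * (\<Prod>j\<in>{..<length ns} - {i}. f (ns ! j) (u j t))) =
      (\<Sum>i<length ns. u' i *
         (if 0 < ns ! i then \<Prod>j<length ns. f (ns[i := ns ! i - 1] ! j) (u j t) else 0))"
    using lowered by (intro sum.cong) auto
  finally show ?thesis .
qed

lemma sum_lowered_prod_f_eq:
  assumes "1 \<le> l" "l \<le> length as"
  shows "(\<Sum>ns\<in>{ns\<in>S_set (length as). 0 < ns ! (l - 1)}.
      \<Prod>j<length as. f (ns[l - 1 := ns ! (l - 1) - 1] ! j) (as ! j)) =
    (\<Sum>k=l..length as. C1_appell f (take (k - 1) as) * C1_appell f (drop k as))"
  unfolding sum_prod_S_set_lower[where h = "\<lambda>j n. f n (as ! j)", OF f_0 assms]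
  using assms by (intro sum.cong refl arg_cong2[where f = times]) (auto simp: C1_appell_def)

lemma has_real_derivative_C1_appell_update:
  assumes "1 \<le> l" "l \<le> length as"
  shows "((\<lambda>t. C1_appell f (as[l - 1 := t])) has_real_derivative
      (\<Sum>k=l..length as. C1_appell f (take (k - 1) as) * C1_appell f (drop k as))) (at (as ! (l - 1)))"
proof -
  define r where "r = length as"
  let ?lower = "\<lambda>ns. ns[l - 1 := ns ! (l - 1) - 1]"
  have "((\<lambda>t. \<Prod>j<r. f (ns ! j) (as[l - 1 := t] ! j)) has_real_derivative
      (if 0 < ns ! (l - 1) then \<Prod>j<r. f (?lower ns ! j) (as ! j) else 0)) (at (as ! (l - 1)))"
    if "ns \<in> S_set r" for ns
  proof -
    have len: "length ns = r"
      using that by (rule length_S_set)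
    have u: "((\<lambda>t. as[l - 1 := t] ! j) has_real_derivative (if j = l - 1 then 1 else 0)) (at t)" for j t
      using assms by (cases "j = l - 1") auto
    have "((\<lambda>t. \<Prod>j<r. f (ns ! j) (as[l - 1 := t] ! j)) has_real_derivative
        (\<Sum>i<r. (if i = l - 1 then 1 else 0) *
           (if 0 < ns ! i then \<Prod>j<r. f (ns[i := ns ! i - 1] ! j) (as ! j) else 0))) (at (as ! (l - 1)))"
      using has_real_derivative_prod_f[where t = "as ! (l - 1)" and ns = ns, OF u]
      unfolding len list_update_id .
    also have "(\<Sum>i<r. (if i = l - 1 then 1 else 0) *
           (if 0 < ns ! i then \<Prod>j<r. f (ns[i := ns ! i - 1] ! j) (as ! j) else 0)) =
        (if 0 < ns ! (l - 1) then \<Prod>j<r. f (?lower ns ! j) (as ! j) else 0)"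
      using assms unfolding r_def by (simp add: if_distrib[of "\<lambda>x. x * _"] sum.delta cong: if_cong)
    finally show ?thesis .
  qed
  then have "((\<lambda>t. C1_appell f (as[l - 1 := t])) has_real_derivative
      (\<Sum>ns\<in>S_set r. if 0 < ns ! (l - 1) then \<Prod>j<r. f (?lower ns ! j) (as ! j) else 0))
      (at (as ! (l - 1)))"
    unfolding C1_appell_def length_list_update r_def[symmetric] by (rule DERIV_sum)
  also have "(\<Sum>ns\<in>S_set r. if 0 < ns ! (l - 1) then \<Prod>j<r. f (?lower ns ! j) (as ! j) else 0) =
      (\<Sum>k=l..length as. C1_appell f (take (k - 1) as) * C1_appell f (drop k as))"
    unfolding sum_lowered_prod_f_eq[OF assms, symmetric] r_def
    by (rule sum.inter_filter[OF finite_S_set, symmetric])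
  finally show ?thesis .
qed

lemma has_real_derivative_C1_appell_replicate:
  "((\<lambda>t. C1_appell f (replicate r t)) has_real_derivative
      (\<Sum>l=1..r. \<Sum>k=l..r. C1_appell f (replicate (k - 1) a) * C1_appell f (replicate (r - k) a))) (at a)"
proof -
  let ?lowered = "\<lambda>ns i. \<Prod>j<r. f (ns[i := ns ! i - 1] ! j) a"
  have "((\<lambda>t. C1_appell f (replicate r t)) has_real_derivative
      (\<Sum>ns\<in>S_set r. \<Sum>i<r. if 0 < ns ! i then ?lowered ns i else 0)) (at a)"
    unfolding C1_appell_def length_replicate
  proof (rule DERIV_sum)
    fix ns assume ns: "ns \<in> S_set r"
    have "(\<lambda>t. \<Prod>j<r. f (ns ! j) (replicate r t ! j)) = (\<lambda>t. \<Prod>j<r. f (ns ! j) t)"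
      by (auto intro!: prod.cong)
    then show "((\<lambda>t. \<Prod>j<r. f (ns ! j) (replicate r t ! j)) has_real_derivative
        (\<Sum>i<r. if 0 < ns ! i then ?lowered ns i else 0)) (at a)"
      using has_real_derivative_prod_f[of ns "\<lambda>_ t. t" "\<lambda>_. 1" a] unfolding length_S_set[OF ns] by simp
  qed
  also have "(\<Sum>ns\<in>S_set r. \<Sum>i<r. if 0 < ns ! i then ?lowered ns i else 0) =
      (\<Sum>l=1..r. \<Sum>ns\<in>{ns\<in>S_set r. 0 < ns ! (l - 1)}. ?lowered ns (l - 1))"
    by (subst sum.swap) (simp add: sum.inter_filter[OF finite_S_set] sum.atLeast1_atMost_eq cong: if_cong)
  also have "\<dots> = (\<Sum>l=1..r. \<Sum>k=l..r.
      C1_appell f (replicate (k - 1) a) * C1_appell f (replicate (r - k) a))"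
  proof (rule sum.cong[OF refl])
    fix l assume "l \<in> {1..r}"
    then show "(\<Sum>ns\<in>{ns\<in>S_set r. 0 < ns ! (l - 1)}. ?lowered ns (l - 1)) =
        (\<Sum>k=l..r. C1_appell f (replicate (k - 1) a) * C1_appell f (replicate (r - k) a))"
      using sum_lowered_prod_f_eq[of l "replicate r a"]
      by (auto intro!: sum.cong simp: min_def)
  qed
  finally show ?thesis .
qed

end

interpretation bernpoly_appell: appell_family bernpoly_div_fact
proof
  show "bernpoly_div_fact 0 t = 1" for t
    by (simp add: bernpoly_0)
  show "(bernpoly_div_fact (Suc n) has_real_derivative bernpoly_div_fact n t) (at t)" for n t
    by (rule has_real_derivative_bernpoly_div_fact)
qed

lemma C1_eq_C1_appell: "C1 as = (-1) ^ length as * C1_appell bernpoly_div_fact as"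
  unfolding C1_def C1_appell_def ..

lemma C1_mult_C1_eq:
  assumes "1 \<le> k" "k \<le> r" "length xs = k - 1" "length ys = r - k"
  shows "C1 xs * C1 ys = - ((-1) ^ r * (C1_appell bernpoly_div_fact xs * C1_appell bernpoly_div_fact ys))"
proof -
  have "r = Suc ((k - 1) + (r - k))"
    using assms(1,2) by simp
  then have "(-1::real) ^ r = - ((-1) ^ (k - 1) * (-1) ^ (r - k))"
    by (metis power_Suc power_add mult_minus1)
  then show ?thesis
    unfolding C1_eq_C1_appell assms(3,4) by simp
qed

lemma has_real_derivative_C1_update:
  assumes "1 \<le> l" "l \<le> length as"
  shows "((\<lambda>t. C1 (as[l - 1 := t])) has_real_derivative
      - (\<Sum>k=l..length as. C1 (take (k - 1) as) * C1 (drop k as))) (at (as ! (l - 1)))"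
proof -
  have "- (\<Sum>k=l..length as. C1 (take (k - 1) as) * C1 (drop k as)) = (-1) ^ length as *
      (\<Sum>k=l..length as. C1_appell bernpoly_div_fact (take (k - 1) as) *
                         C1_appell bernpoly_div_fact (drop k as))"
  proof -
    have "C1 (take (k - 1) as) * C1 (drop k as) = - ((-1) ^ length as *
        (C1_appell bernpoly_div_fact (take (k - 1) as) * C1_appell bernpoly_div_fact (drop k as)))"
      if "k \<in> {l..length as}" for k
      using that assms by (intro C1_mult_C1_eq) auto
    then show ?thesis
      by (simp add: sum_distrib_left flip: sum_negf)
  qed
  then show ?thesis
    unfolding C1_eq_C1_appell length_list_update
    using DERIV_cmult[OF bernpoly_appell.has_real_derivative_C1_appell_update[OF assms]] by simp
qed

lemma has_real_derivative_C1diag: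
  "(C1diag r has_real_derivative
      - (\<Sum>l=1..r. \<Sum>k=l..r. C1diag (k - 1) a * C1diag (r - k) a)) (at a)"
proof -
  have "- (\<Sum>l=1..r. \<Sum>k=l..r. C1diag (k - 1) a * C1diag (r - k) a) = (-1) ^ r *
      (\<Sum>l=1..r. \<Sum>k=l..r. C1_appell bernpoly_div_fact (replicate (k - 1) a) *
                            C1_appell bernpoly_div_fact (replicate (r - k) a))"
  proof -
    have "(\<Sum>l=1..r. \<Sum>k=l..r. C1 (replicate (k - 1) a) * C1 (replicate (r - k) a)) =
        (\<Sum>l=1..r. \<Sum>k=l..r. - ((-1) ^ r * (C1_appell bernpoly_div_fact (replicate (k - 1) a) *
                                              C1_appell bernpoly_div_fact (replicate (r - k) a))))"
      by (intro sum.cong refl C1_mult_C1_eq) auto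
    then show ?thesis
      unfolding C1diag_def by (simp add: sum_distrib_left flip: sum_negf)
  qed
  moreover have "C1diag r = (\<lambda>t. (-1) ^ r * C1_appell bernpoly_div_fact (replicate r t))"
    unfolding C1diag_def C1_eq_C1_appell by simp
  ultimately show ?thesis
    using DERIV_cmult[OF bernpoly_appell.has_real_derivative_C1_appell_replicate] by simp
qed

lemma sum_triangle_atLeastAtMost:
  fixes g :: "nat \<Rightarrow> 'a::comm_semiring_1"
  shows "(\<Sum>l=1..r. \<Sum>k=l..r. g k) = (\<Sum>k=1..r. of_nat k * g k)"
proof (induction r)
  case (Suc r)
  have "(\<Sum>l=1..Suc r. \<Sum>k=l..Suc r. g k) = (\<Sum>l=1..r. \<Sum>k=l..Suc r. g k) + g (Suc r)"
    by simp
  also have "(\<Sum>l=1..r. \<Sum>k=l..Suc r. g k) = (\<Sum>l=1..r. (\<Sum>k=l..r. g k) + g (Suc r))"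
    by (intro sum.cong refl) simp
  also have "\<dots> = (\<Sum>k=1..r. of_nat k * g k) + of_nat r * g (Suc r)"
    using Suc by (simp add: sum.distrib)
  finally show ?case
    by (simp add: algebra_simps)
qed simp

theorem lemma6p9:
  shows "(\<forall>(as :: real list) l. 1 \<le> l \<and> l \<le> length as \<longrightarrow>
           ((\<lambda>t. C1 (as[l - 1 := t])) has_real_derivative
              (- (\<Sum>k = l..length as. C1 (take (k - 1) as) * C1 (drop k as))))
             (at (as ! (l - 1))))
       \<and> (\<forall>(r :: nat) (a :: real). 1 \<le> r \<longrightarrow>
           (C1diag r has_real_derivative
              (- (\<Sum>l = 1..r. \<Sum>k = l..r. C1diag (k - 1) a * C1diag (r - k) a))) (at a)
           \<and> (- (\<Sum>l = 1..r. \<Sum>k = l..r. C1diag (k - 1) a * C1diag (r - k) a))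
              = - (\<Sum>k = 1..r. real k * C1diag (r - k) a * C1diag (k - 1) a))"
proof -
  have "(\<Sum>l=1..r. \<Sum>k=l..r. C1diag (k - 1) a * C1diag (r - k) a) =
      (\<Sum>k=1..r. real k * C1diag (r - k) a * C1diag (k - 1) a)" for r a
    using sum_triangle_atLeastAtMost[of "\<lambda>k. C1diag (k - 1) a * C1diag (r - k) a" r]
    by (simp add: mult_ac)
  then show ?thesis
    using has_real_derivative_C1_update has_real_derivative_C1diag by simp
qed

end
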